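(* Under assumptions (i) and (ii) of the context, fix $l\in[L]$ and let $\mathbf H^{(l-1)}$ be any output of the first $l-1$ GIN layers (with weights satisfying (ii)) on input $\mathbf G$ (for $l=1$, $\mathbf H^{(0)}=\mathbf X$). Then for every $\epsilon>0$, the set $\mathcal S_l=\{\mathbf H^{(l)}\text{ computed from }\mathbf H^{(l-1)}\text{ by layer }l\text{ with weights satisfying (ii)}\}$ satisfies $$\ln\mathcal N(\epsilon,\mathcal S_l,\|\cdot\|_2)\le\frac{c^{2l}\tau_l^2\big(\prod_{i=1}^l\kappa_i\big)^2}{\epsilon^2}\|\mathbf X\|_2^2\ln(2\bar d^2),$$ where $\kappa_i=\prod_{j=1}^r\kappa_j^{(i)}$, $\tau_l=\big(\sum_{i=1}^r(b_i^{(l)}/\kappa_i^{(l)})^{2/3}\big)^{3/2}$, $c=\|\tilde{\mathbf A}\|_\sigma$, $\bar d=\max_{i,l}d_i^{(l)}$.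
   Context: Data: $N$ graphs $G_i=(\mathbf A_i,\mathbf X_i)$, $\mathbf A_i\in\{0,1\}^{n_i\times n_i}$ symmetric adjacency, $\mathbf X_i\in\mathbb R^{n_i\times d_0}$; $\mathbf X=[\mathbf X_1^\top,\dots,\mathbf X_N^\top]^\top$, $\mathbf A=\mathrm{diag}(\mathbf A_1,\dots,\mathbf A_N)$, $\tilde{\mathbf A}=\mathbf A+\mathbf I$, $\mathbf G=(\tilde{\mathbf A},\mathbf X)$. $\|\cdot\|_2$ Frobenius norm, $\|\cdot\|_\sigma$ spectral norm, $\|\mathbf M\|_{2,1}=\sum_j\|\mathbf M_{:,j}\|_2$. GIN layer $l$: with weights $\mathbf W_i^{(l)}\in\mathbb R^{d_{i-1}^{(l)}\times d_i^{(l)}}$ ($d_0^{(1)}=d_0$, $d_0^{(l)}=d_r^{(l-1)}$) and entrywise activation $\sigma$, $\mathbf H^{(l)}=\sigma(\cdots\sigma(\sigma(\tilde{\mathbf A}\mathbf H^{(l-1)}\mathbf W_1^{(l)})\mathbf W_2^{(l)})\cdots\mathbf W_{r-1}^{(l)})\mathbf W_r^{(l)}$, $\mathbf H^{(0)}=\mathbf X$. Assumptions: (i) $\sigma$ 1-Lipschitz with $\sigma(0)=0$; (ii) $\|\mathbf W_i^{(l)}\|_\sigma\le\kappa_i^{(l)}$, $\|\mathbf W_i^{(l)}\|_{2,1}\le b_i^{(l)}$. $\mathcal N(\epsilon,\mathcal S,\|\cdot\|_2)$ denotes the minimal cardinality of a set $V$ of matrices such that every element of $\mathcal S$ lies within Frobenius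 distance $\epsilon$ of some element of $V$. *)

theory Defs
  imports Complex_Main "HOL-Library.Extended_Nat"
begin

text \<open>Matrices are represented as functions nat => nat => real together with
explicit dimensions; only entries with row index < m and column index < k matter.\<close>

type_synonym mat = "nat \<Rightarrow> nat \<Rightarrow> real"

definition mmul :: "nat \<Rightarrow> mat \<Rightarrow> mat \<Rightarrow> mat" where
  "mmul k M P = (\<lambda>p q. \<Sum>t<k. M p t * P t q)"

definition msub :: "mat \<Rightarrow> mat \<Rightarrow> mat" where
  "msub M P = (\<lambda>p q. M p q - P p q)"

definition frob :: "nat \<Rightarrow> nat \<Rightarrow> mat \<Rightarrow> real" where
  "frob m k M = sqrt (\<Sum>p<m. \<Sum>q<k. (M p q)\<^sup>2)"

definition norm21 :: "nat \<Rightarrow> nat \<Rightarrow> mat \<Rightarrow> real" where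
  "norm21 m k M = (\<Sum>q<k. sqrt (\<Sum>p<m. (M p q)\<^sup>2))"

definition specn :: "nat \<Rightarrow> nat \<Rightarrow> mat \<Rightarrow> real" where
  "specn m k M = Sup {sqrt (\<Sum>p<m. (\<Sum>q<k. M p q * v q)\<^sup>2) | v.
                        (\<Sum>q<k. (v q)\<^sup>2) \<le> 1}"

text \<open>Covering number N(eps, S, Frobenius norm) for a set S of m x k matrices
(infinity if no finite cover exists).\<close>
definition covering_number :: "real \<Rightarrow> mat set \<Rightarrow> nat \<Rightarrow> nat \<Rightarrow> enat" where
  "covering_number \<epsilon> S m k =
     (INF V \<in> {V. finite V \<and> (\<forall>M\<in>S. \<exists>U\<in>V. frob m k (msub M U) \<le> \<epsilon>)}. enat (card V))"

text \<open>Block-diagonal assembly of N graphs: n i is the number of nodes of graph i.\<close>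
definition offs :: "(nat \<Rightarrow> nat) \<Rightarrow> nat \<Rightarrow> nat" where
  "offs n i = (\<Sum>j<i. n j)"

definition blockdiag :: "nat \<Rightarrow> (nat \<Rightarrow> nat) \<Rightarrow> (nat \<Rightarrow> mat) \<Rightarrow> mat" where
  "blockdiag N n Ag = (\<lambda>p q. \<Sum>i<N.
      if offs n i \<le> p \<and> p < offs n i + n i \<and> offs n i \<le> q \<and> q < offs n i + n i
      then Ag i (p - offs n i) (q - offs n i) else 0)"

definition vstack :: "nat \<Rightarrow> (nat \<Rightarrow> nat) \<Rightarrow> (nat \<Rightarrow> mat) \<Rightarrow> mat" where
  "vstack N n Xg = (\<lambda>p j. \<Sum>i<N.
      if offs n i \<le> p \<and> p < offs n i + n i then Xg i (p - offs n i) j else 0)"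

definition addI :: "mat \<Rightarrow> mat" where
  "addI A = (\<lambda>p q. A p q + (if p = q then 1 else 0))"

text \<open>One GIN layer with r weight matrices W 1 .. W r, W i of size d(i-1) x d i,
applied to H (n x d 0):  sigma(...sigma(sigma(At H W1) W2)...W(r-1)) Wr.
gin_stage j is the pre-activation after j weight multiplications (gin_stage 0 = At H).\<close>
fun gin_stage :: "(real \<Rightarrow> real) \<Rightarrow> mat \<Rightarrow> nat \<Rightarrow> (nat \<Rightarrow> nat) \<Rightarrow> (nat \<Rightarrow> mat) \<Rightarrow> mat \<Rightarrow> nat \<Rightarrow> mat" where
  "gin_stage \<sigma> At n d W H 0 = mmul n At H"
| "gin_stage \<sigma> At n d W H (Suc j) =
     mmul (d j) (if j = 0 then gin_stage \<sigma> At n d W H 0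
                 else (\<lambda>p q. \<sigma> (gin_stage \<sigma> At n d W H j p q))) (W (Suc j))"

definition gin_layer :: "(real \<Rightarrow> real) \<Rightarrow> mat \<Rightarrow> nat \<Rightarrow> nat \<Rightarrow> (nat \<Rightarrow> nat) \<Rightarrow> (nat \<Rightarrow> mat) \<Rightarrow> mat \<Rightarrow> mat" where
  "gin_layer \<sigma> At n r d W H = gin_stage \<sigma> At n d W H r"

text \<open>Output of the first l layers; d l i and W l i are the dimensions / weights of layer l.\<close>
fun gin_net :: "(real \<Rightarrow> real) \<Rightarrow> mat \<Rightarrow> nat \<Rightarrow> nat \<Rightarrow> (nat \<Rightarrow> nat \<Rightarrow> nat) \<Rightarrow> (nat \<Rightarrow> nat \<Rightarrow> mat) \<Rightarrow> mat \<Rightarrow> nat \<Rightarrow> mat" where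
  "gin_net \<sigma> At n r d W X 0 = X"
| "gin_net \<sigma> At n r d W X (Suc l) = gin_layer \<sigma> At n r (d (Suc l)) (W (Suc l)) (gin_net \<sigma> At n r d W X l)"

definition weights_ok :: "nat \<Rightarrow> (nat \<Rightarrow> nat) \<Rightarrow> (nat \<Rightarrow> real) \<Rightarrow> (nat \<Rightarrow> real) \<Rightarrow> (nat \<Rightarrow> mat) \<Rightarrow> bool" where
  "weights_ok r d \<kappa> b W \<longleftrightarrow> (\<forall>i\<in>{1..r}.
      specn (d (i - 1)) (d i) (W i) \<le> \<kappa> i \<and> norm21 (d (i - 1)) (d i) (W i) \<le> b i)"

end

theory Submission
  imports Defs "HOL-Analysis.L2_Norm" "HOL-Analysis.Convex"
begin

text \<open>A product \<open>Y V\<close> with \<open>\<parallel>V\<parallel>\<^sub>2\<^sub>,\<^sub>1 \<le> b\<close> is a convex combination of the \<open>2 d\<^sub>i\<^sub>n d\<^sub>o\<^sub>u\<^sub>t\<close>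
  matrices \<open>\<plusminus>\<parallel>Y\<parallel>\<^sub>F b y\<^sub>a e\<^sub>q\<^sup>T\<close>, where \<open>y\<^sub>a\<close> is a normalised column of \<open>Y\<close>. By Maurey's
  empirical method it therefore lies within \<open>\<parallel>Y\<parallel>\<^sub>F b / (\<surd>k + 1)\<close> of an average of \<open>k\<close> of
  them, so \<open>(2 d\<^sub>i\<^sub>n d\<^sub>o\<^sub>u\<^sub>t)\<^sup>k\<close> matrices cover all such products. Covering the \<open>r\<close> stages of the
  layer one after the other, the error of stage \<open>i\<close> is amplified by the spectral norms of the
  later weights, while the norm of its input is controlled by the spectral norms of all earlier
  weights. Splitting \<open>\<epsilon>\<close> over the stages proportionally to \<open>(b\<^sub>i/\<kappa>\<^sub>i)\<^sup>2\<^sup>/\<^sup>3\<close> makes the total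
  number of samples \<open>c\<^sup>2\<^sup>l \<tau>\<^sub>l\<^sup>2 (\<Prod>\<^sub>i \<kappa>\<^sub>i)\<^sup>2 \<parallel>X\<parallel>\<^sup>2 / \<epsilon>\<^sup>2\<close>.\<close>

section \<open>Frobenius and spectral norms\<close>

lemma frob_nonneg: "0 \<le> frob m k M"
  unfolding frob_def by (simp add: sum_nonneg)

lemma frob_power2: "(frob m k M)\<^sup>2 = (\<Sum>p<m. \<Sum>q<k. (M p q)\<^sup>2)"
  unfolding frob_def by (simp add: sum_nonneg)

lemma frob_eq_L2_set: "frob m k M = L2_set (\<lambda>(p, q). M p q) ({..<m} \<times> {..<k})"
  unfolding frob_def L2_set_def by (simp add: sum.cartesian_product case_prod_beta)

lemma frob_no_cols [simp]: "frob m 0 M = 0"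
  unfolding frob_def by simp

lemma frob_zero [simp]: "frob m k (\<lambda>p q. 0) = 0"
  unfolding frob_def by simp

lemma frob_msub_zero [simp]: "frob m k (msub M (\<lambda>p q. 0)) = frob m k M"
  unfolding msub_def by simp

lemma frob_msub_self [simp]: "frob m k (msub M M) = 0"
  unfolding msub_def by simp

lemma frob_scale: "frob m k (\<lambda>p q. c * M p q) = \<bar>c\<bar> * frob m k M"
proof -
  have "(\<Sum>p<m. \<Sum>q<k. (c * M p q)\<^sup>2) = c\<^sup>2 * (\<Sum>p<m. \<Sum>q<k. (M p q)\<^sup>2)"
    by (simp add: power_mult_distrib sum_distrib_left)
  then show ?thesis
    unfolding frob_def by (simp add: real_sqrt_mult)
qed

lemma frob_triangle: "frob m k (msub M P) \<le> frob m k (msub M Q) + frob m k (msub Q P)"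
proof -
  have "(\<lambda>(p, q). msub M P p q) = (\<lambda>x. (\<lambda>(p, q). msub M Q p q) x + (\<lambda>(p, q). msub Q P p q) x)"
    by (auto simp: msub_def)
  then show ?thesis
    unfolding frob_eq_L2_set by (simp only: L2_set_triangle_ineq)
qed

lemma frob_msub_map_le:
  assumes "\<forall>x y. \<bar>f x - f y\<bar> \<le> \<bar>x - y\<bar>"
  shows "frob m k (msub (\<lambda>p q. f (M p q)) (\<lambda>p q. f (P p q))) \<le> frob m k (msub M P)"
  unfolding frob_def msub_def
proof (intro real_sqrt_le_mono sum_mono)
  fix p q
  show "(f (M p q) - f (P p q))\<^sup>2 \<le> (M p q - P p q)\<^sup>2"
    using assms by (metis abs_ge_zero power2_abs power_mono)
qed

lemma frob_map_le:
  assumes "\<forall>x y. \<bar>f x - f y\<bar> \<le> \<bar>x - y\<bar>" and "f 0 = 0"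
  shows "frob m k (\<lambda>p q. f (M p q)) \<le> frob m k M"
  using frob_msub_map_le[OF assms(1), of m k M "\<lambda>p q. 0"] assms(2)
  by (simp add: msub_def)

lemma mmul_msub: "mmul k (msub M P) W = msub (mmul k M W) (mmul k P W)"
  unfolding mmul_def msub_def by (simp add: left_diff_distrib sum_subtractf)

lemma sum_mult_le_sqrt:
  "(\<Sum>q\<in>A. f q * g q :: real) \<le> sqrt (\<Sum>q\<in>A. (f q)\<^sup>2) * sqrt (\<Sum>q\<in>A. (g q)\<^sup>2)"
proof -
  have "(\<Sum>q\<in>A. f q * g q) \<le> sqrt ((\<Sum>q\<in>A. f q * g q)\<^sup>2)"
    by simp
  also have "\<dots> \<le> sqrt ((\<Sum>q\<in>A. (f q)\<^sup>2) * (\<Sum>q\<in>A. (g q)\<^sup>2))"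
    by (rule real_sqrt_le_mono[OF Cauchy_Schwarz_ineq_sum])
  finally show ?thesis
    by (simp add: real_sqrt_mult)
qed

lemma frob_mmul_le: "frob n k (mmul m Y V) \<le> frob n m Y * frob m k V"
proof (rule power2_le_imp_le)
  have "(frob n k (mmul m Y V))\<^sup>2 \<le> (\<Sum>p<n. \<Sum>q<k. (\<Sum>t<m. (Y p t)\<^sup>2) * (\<Sum>t<m. (V t q)\<^sup>2))"
    unfolding frob_power2 mmul_def by (intro sum_mono Cauchy_Schwarz_ineq_sum)
  also have "\<dots> = (frob n m Y)\<^sup>2 * (frob m k V)\<^sup>2"
    unfolding frob_power2 sum_product[symmetric] by (simp add: sum.swap[of _ "{..<k}"])
  finally show "(frob n k (mmul m Y V))\<^sup>2 \<le> (frob n m Y * frob m k V)\<^sup>2"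
    by (simp add: power_mult_distrib)
qed (simp add: frob_nonneg)

lemma frob_le_norm21: "frob m k V \<le> norm21 m k V"
proof -
  have "frob m k V = L2_set (\<lambda>q. sqrt (\<Sum>p<m. (V p q)\<^sup>2)) {..<k}"
    unfolding frob_def L2_set_def by (simp add: sum_nonneg sum.swap[of _ "{..<m}"])
  also have "\<dots> \<le> norm21 m k V"
    unfolding norm21_def by (rule L2_set_le_sum) (simp add: sum_nonneg)
  finally show ?thesis .
qed

lemma specn_set_bdd_above:
  fixes M :: mat and m k :: nat
  shows "bdd_above {sqrt (\<Sum>p<m. (\<Sum>q<k. M p q * v q)\<^sup>2) | v. (\<Sum>q<k. (v q)\<^sup>2) \<le> 1}"
proof (rule bdd_aboveI, clarify)
  fix v :: "nat \<Rightarrow> real"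
  assume v: "(\<Sum>q<k. (v q)\<^sup>2) \<le> 1"
  have "(\<Sum>p<m. (\<Sum>q<k. M p q * v q)\<^sup>2) \<le> (\<Sum>p<m. (\<Sum>q<k. (M p q)\<^sup>2) * (\<Sum>q<k. (v q)\<^sup>2))"
    by (intro sum_mono Cauchy_Schwarz_ineq_sum)
  also have "\<dots> \<le> (\<Sum>p<m. \<Sum>q<k. (M p q)\<^sup>2)"
    using v by (intro sum_mono) (simp add: mult_left_le sum_nonneg)
  finally show "sqrt (\<Sum>p<m. (\<Sum>q<k. M p q * v q)\<^sup>2) \<le> frob m k M"
    unfolding frob_def by (rule real_sqrt_le_mono)
qed

lemma specn_ge: "(\<Sum>q<k. (v q)\<^sup>2) \<le> 1 \<Longrightarrow> sqrt (\<Sum>p<m. (\<Sum>q<k. M p q * v q)\<^sup>2) \<le> specn m k M"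
  unfolding specn_def by (rule cSup_upper[OF _ specn_set_bdd_above]) blast

lemma specn_nonneg: "0 \<le> specn m k M"
  using specn_ge[where v="\<lambda>q. 0" and m=m and k=k and M=M] by simp

lemma specn_mult_vec_le:
  "sqrt (\<Sum>p<m. (\<Sum>q<k. M p q * v q)\<^sup>2) \<le> specn m k M * sqrt (\<Sum>q<k. (v q)\<^sup>2)"
proof (cases "(\<Sum>q<k. (v q)\<^sup>2) = 0")
  case True
  then have "\<forall>q<k. v q = 0"
    by (simp add: sum_nonneg_eq_0_iff)
  then show ?thesis
    using True by simp
next
  case False
  define s where "s = sqrt (\<Sum>q<k. (v q)\<^sup>2)"
  have s: "0 < s"
    using False unfolding s_def by (simp add: sum_nonneg order_le_neq_trans)
  have "(\<Sum>q<k. (v q / s)\<^sup>2) = 1"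
    using s False unfolding s_def by (simp add: power_divide sum_divide_distrib[symmetric] sum_nonneg)
  then have unit: "sqrt (\<Sum>p<m. (\<Sum>q<k. M p q * (v q / s))\<^sup>2) \<le> specn m k M"
    by (intro specn_ge) simp
  have "(\<Sum>q<k. M p q * v q) = s * (\<Sum>q<k. M p q * (v q / s))" for p
    using s by (simp add: sum_distrib_left)
  then have "sqrt (\<Sum>p<m. (\<Sum>q<k. M p q * v q)\<^sup>2) = s * sqrt (\<Sum>p<m. (\<Sum>q<k. M p q * (v q / s))\<^sup>2)"
    using s by (simp add: power_mult_distrib sum_distrib_left[symmetric] real_sqrt_mult)
  also have "\<dots> \<le> s * specn m k M"
    using unit s by simp
  finally show ?thesis
    unfolding s_def by (simp add: mult.commute)
qed

lemma frob_mmul_left_le: "frob m k (mmul n A H) \<le> specn m n A * frob n k H"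
proof (rule power2_le_imp_le)
  have "(frob m k (mmul n A H))\<^sup>2 = (\<Sum>q<k. \<Sum>p<m. (\<Sum>t<n. A p t * H t q)\<^sup>2)"
    unfolding frob_power2 mmul_def by (rule sum.swap)
  also have "\<dots> \<le> (\<Sum>q<k. (specn m n A)\<^sup>2 * (\<Sum>t<n. (H t q)\<^sup>2))"
  proof (rule sum_mono)
    fix q
    show "(\<Sum>p<m. (\<Sum>t<n. A p t * H t q)\<^sup>2) \<le> (specn m n A)\<^sup>2 * (\<Sum>t<n. (H t q)\<^sup>2)"
      using sqrt_le_D[OF specn_mult_vec_le] by (simp add: power_mult_distrib sum_nonneg)
  qed
  also have "\<dots> = (specn m n A * frob n k H)\<^sup>2"
    unfolding power_mult_distrib frob_power2 sum_distrib_left by (rule sum.swap)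
  finally show "(frob m k (mmul n A H))\<^sup>2 \<le> (specn m n A * frob n k H)\<^sup>2" .
qed (simp add: specn_nonneg frob_nonneg)

text \<open>By duality: for \<open>u = h W\<close> one has \<open>\<parallel>u\<parallel>\<^sup>2 = \<langle>h, W u\<rangle> \<le> \<parallel>h\<parallel> \<parallel>W\<parallel>\<^sub>\<sigma> \<parallel>u\<parallel>\<close>.\<close>
lemma row_mmul_le:
  "sqrt (\<Sum>q<k. (\<Sum>t<m. h t * W t q)\<^sup>2) \<le> specn m k W * sqrt (\<Sum>t<m. (h t)\<^sup>2)"
proof -
  define u where "u q = (\<Sum>t<m. h t * W t q)" for q
  define nu where "nu = sqrt (\<Sum>q<k. (u q)\<^sup>2)"
  have "nu\<^sup>2 = (\<Sum>q<k. u q * (\<Sum>t<m. h t * W t q))"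
    unfolding nu_def u_def by (simp add: sum_nonneg power2_eq_square)
  also have "\<dots> = (\<Sum>t<m. h t * (\<Sum>q<k. W t q * u q))"
    by (simp add: sum_distrib_left mult_ac sum.swap[of _ "{..<k}"])
  also have "\<dots> \<le> sqrt (\<Sum>t<m. (h t)\<^sup>2) * sqrt (\<Sum>t<m. (\<Sum>q<k. W t q * u q)\<^sup>2)"
    by (rule sum_mult_le_sqrt)
  also have "\<dots> \<le> sqrt (\<Sum>t<m. (h t)\<^sup>2) * (specn m k W * nu)"
    unfolding nu_def by (intro mult_left_mono specn_mult_vec_le) (simp add: sum_nonneg)
  finally have "nu * nu \<le> (specn m k W * sqrt (\<Sum>t<m. (h t)\<^sup>2)) * nu"
    by (simp add: power2_eq_square mult_ac)
  moreover have "0 \<le> nu" "0 \<le> specn m k W * sqrt (\<Sum>t<m. (h t)\<^sup>2)"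
    unfolding nu_def by (simp_all add: specn_nonneg sum_nonneg)
  ultimately have "nu \<le> specn m k W * sqrt (\<Sum>t<m. (h t)\<^sup>2)"
    by (cases "nu = 0") (auto simp: mult_le_cancel_right)
  then show ?thesis
    unfolding nu_def u_def .
qed

lemma frob_mmul_right_le: "frob n k (mmul m H W) \<le> specn m k W * frob n m H"
proof (rule power2_le_imp_le)
  have "(frob n k (mmul m H W))\<^sup>2 \<le> (\<Sum>p<n. (specn m k W)\<^sup>2 * (\<Sum>t<m. (H p t)\<^sup>2))"
    unfolding frob_power2 mmul_def
  proof (rule sum_mono)
    fix p
    show "(\<Sum>q<k. (\<Sum>t<m. H p t * W t q)\<^sup>2) \<le> (specn m k W)\<^sup>2 * (\<Sum>t<m. (H p t)\<^sup>2)"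
      using sqrt_le_D[OF row_mmul_le] by (simp add: power_mult_distrib sum_nonneg)
  qed
  also have "\<dots> = (specn m k W * frob n m H)\<^sup>2"
    unfolding power_mult_distrib frob_power2 by (simp add: sum_distrib_left)
  finally show "(frob n k (mmul m H W))\<^sup>2 \<le> (specn m k W * frob n m H)\<^sup>2" .
qed (simp add: specn_nonneg frob_nonneg)

section \<open>Norm of the input to a layer\<close>

lemma frob_gin_stage_le:
  assumes "\<forall>x y. \<bar>\<sigma> x - \<sigma> y\<bar> \<le> \<bar>x - y\<bar>" and "\<sigma> 0 = 0"
    and "frob n (d 0) H \<le> B"
    and "\<forall>i\<in>{1..j}. specn (d (i - 1)) (d i) (W i) \<le> \<kappa> i"
  shows "frob n (d j) (gin_stage \<sigma> At n d W H j) \<le> specn n n At * B * (\<Prod>i=1..j. \<kappa> i)"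
  using assms(4)
proof (induction j)
  case 0
  show ?case
    using frob_mmul_left_le[of n "d 0" n At H] assms(3) specn_nonneg[of n n At]
    by (simp add: order_trans mult_left_mono)
next
  case (Suc j)
  define G where "G = gin_stage \<sigma> At n d W H j"
  have W: "specn (d j) (d (Suc j)) (W (Suc j)) \<le> \<kappa> (Suc j)"
    using bspec[OF Suc.prems, of "Suc j"] by simp
  have act: "frob n (d j) (if j = 0 then G else (\<lambda>p q. \<sigma> (G p q))) \<le> frob n (d j) G"
    using frob_map_le[OF assms(1,2)] by simp
  have "frob n (d (Suc j)) (gin_stage \<sigma> At n d W H (Suc j))
      \<le> specn (d j) (d (Suc j)) (W (Suc j)) * frob n (d j) (if j = 0 then G else (\<lambda>p q. \<sigma> (G p q)))"
    unfolding G_def by (simp add: frob_mmul_right_le)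
  also have "\<dots> \<le> \<kappa> (Suc j) * (specn n n At * B * (\<Prod>i=1..j. \<kappa> i))"
    using Suc act W unfolding G_def
    by (intro mult_mono) (auto intro: order_trans specn_nonneg frob_nonneg)
  finally show ?case
    by (simp add: prod.nat_ivl_Suc' mult_ac)
qed

lemma frob_gin_net_le:
  assumes "\<forall>x y. \<bar>\<sigma> x - \<sigma> y\<bar> \<le> \<bar>x - y\<bar>" and "\<sigma> 0 = 0"
    and "d 1 0 = d0" and "\<forall>k\<in>{2..L}. d k 0 = d (k - 1) r" and "l \<le> L"
    and "\<forall>k\<in>{1..<l}. weights_ok r (d k) (\<kappa> k) (b k) (W k)"
  shows "k < l \<Longrightarrow> frob n (d (Suc k) 0) (gin_net \<sigma> At n r d W X k)
           \<le> specn n n At ^ k * (\<Prod>i=1..k. \<Prod>j=1..r. \<kappa> i j) * frob n d0 X"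
proof (induction k)
  case 0
  then show ?case
    using assms(3) by simp
next
  case (Suc k)
  have "\<forall>i\<in>{1..r}. specn (d (Suc k) (i - 1)) (d (Suc k) i) (W (Suc k) i) \<le> \<kappa> (Suc k) i"
    using assms(6) Suc.prems unfolding weights_ok_def by auto
  then have "frob n (d (Suc k) r) (gin_net \<sigma> At n r d W X (Suc k))
      \<le> specn n n At * (specn n n At ^ k * (\<Prod>i=1..k. \<Prod>j=1..r. \<kappa> i j) * frob n d0 X)
        * (\<Prod>j=1..r. \<kappa> (Suc k) j)"
    using Suc unfolding gin_net.simps gin_layer_def by (intro frob_gin_stage_le[OF assms(1,2)]) simp_all
  then show ?case
    using assms(4,5) Suc.prems by (simp add: prod.nat_ivl_Suc' mult_ac)
qed

lemma frob_layer_input_le: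
  assumes "\<forall>x y. \<bar>\<sigma> x - \<sigma> y\<bar> \<le> \<bar>x - y\<bar>" and "\<sigma> 0 = 0"
    and "d 1 0 = d0" and "\<forall>k\<in>{2..L}. d k 0 = d (k - 1) r" and "l \<in> {1..L}"
    and "\<forall>k\<in>{1..<l}. weights_ok r (d k) (\<kappa> k) (b k) (W k)"
  shows "frob n (d l 0) (mmul n At (gin_net \<sigma> At n r d W X (l - 1)))
           \<le> specn n n At ^ l * (\<Prod>i=1..l-1. \<Prod>j=1..r. \<kappa> i j) * frob n d0 X"
proof -
  have "frob n (d l 0) (gin_net \<sigma> At n r d W X (l - 1))
      \<le> specn n n At ^ (l - 1) * (\<Prod>i=1..l-1. \<Prod>j=1..r. \<kappa> i j) * frob n d0 X"
    using frob_gin_net_le[OF assms(1-4) _ assms(6), of "l - 1"] assms(5) by simp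
  then have "frob n (d l 0) (mmul n At (gin_net \<sigma> At n r d W X (l - 1)))
      \<le> specn n n At * (specn n n At ^ (l - 1) * (\<Prod>i=1..l-1. \<Prod>j=1..r. \<kappa> i j) * frob n d0 X)"
    using frob_mmul_left_le specn_nonneg by (blast intro: order_trans mult_left_mono)
  then show ?thesis
    using assms(5) by (simp add: power_eq_if mult_ac)
qed

section \<open>Maurey's empirical method\<close>

text \<open>\<open>iid_expectation I p k f\<close> is the expectation of \<open>f J\<close> for a list \<open>J\<close> of \<open>k\<close> independent
  samples from the distribution \<open>p\<close> on \<open>I\<close>, computed by conditioning on the first sample.\<close>
fun iid_expectation :: "'i set \<Rightarrow> ('i \<Rightarrow> real) \<Rightarrow> nat \<Rightarrow> ('i list \<Rightarrow> real) \<Rightarrow> real" where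
  "iid_expectation I p 0 f = f []"
| "iid_expectation I p (Suc k) f = (\<Sum>i\<in>I. p i * iid_expectation I p k (\<lambda>J. f (i # J)))"

lemma iid_expectation_sum:
  "iid_expectation I p k (\<lambda>J. \<Sum>c\<in>D. f c J) = (\<Sum>c\<in>D. iid_expectation I p k (f c))"
proof (induction k arbitrary: f)
  case (Suc k)
  then show ?case
    by (simp add: sum_distrib_left sum.swap[of _ I])
qed simp

lemma iid_expectation_cmult:
  "iid_expectation I p k (\<lambda>J. a * f J) = a * iid_expectation I p k f"
  by (induction k arbitrary: f) (simp_all add: sum_distrib_left mult_ac)

lemma iid_expectation_sq_dev:
  fixes p A :: "'i \<Rightarrow> real"
  assumes "sum p I = 1"
  defines "m \<equiv> \<Sum>i\<in>I. p i * A i" and "Q \<equiv> \<Sum>i\<in>I. p i * (A i)\<^sup>2"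
  shows "iid_expectation I p k (\<lambda>J. (z - (\<Sum>i\<leftarrow>J. A i))\<^sup>2) = (z - real k * m)\<^sup>2 + real k * (Q - m\<^sup>2)"
proof (induction k arbitrary: z)
  case (Suc k)
  define w where "w = z - real k * m"
  have "iid_expectation I p (Suc k) (\<lambda>J. (z - (\<Sum>i\<leftarrow>J. A i))\<^sup>2)
      = (\<Sum>i\<in>I. p i * iid_expectation I p k (\<lambda>J. ((z - A i) - (\<Sum>i\<leftarrow>J. A i))\<^sup>2))"
    by (simp add: algebra_simps)
  also have "\<dots> = (\<Sum>i\<in>I. p i * ((w - A i)\<^sup>2 + real k * (Q - m\<^sup>2)))"
    unfolding Suc.IH w_def by (simp add: algebra_simps)
  also have "\<dots> = (\<Sum>i\<in>I. (w\<^sup>2 + real k * (Q - m\<^sup>2)) * p i - 2 * w * (p i * A i) + p i * (A i)\<^sup>2)"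
    by (intro sum.cong) (auto simp: power2_eq_square algebra_simps)
  also have "\<dots> = w\<^sup>2 + real k * (Q - m\<^sup>2) - 2 * w * m + Q"
    using assms(1) unfolding m_def Q_def
    by (simp add: sum.distrib sum_subtractf sum_distrib_left[symmetric])
  also have "\<dots> = (z - real (Suc k) * m)\<^sup>2 + real (Suc k) * (Q - m\<^sup>2)"
    unfolding w_def by (simp add: power2_eq_square algebra_simps)
  finally show ?case .
qed simp

text \<open>Shrinking the empirical sum by \<open>k + \<surd>k\<close> instead of \<open>k\<close> makes the squared bias
  cancel against the variance reduction, leaving the second moment divided by \<open>(\<surd>k + 1)\<^sup>2\<close>.\<close>
lemma iid_expectation_shrunk_mean:
  assumes "sum p I = 1" and "(\<Sum>i\<in>I. p i * A i) = x" and "1 \<le> k"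
  shows "iid_expectation I p k (\<lambda>J. (x - (\<Sum>i\<leftarrow>J. A i) / (real k + sqrt k))\<^sup>2)
       = (\<Sum>i\<in>I. p i * (A i)\<^sup>2) / (sqrt k + 1)\<^sup>2"
proof -
  define c where "c = real k + sqrt k"
  have sk: "0 < sqrt (real k)"
    using assms(3) by simp
  have c: "c = sqrt k * (sqrt k + 1)"
    unfolding c_def by (simp add: algebra_simps)
  have "0 < c"
    using sk unfolding c_def by (simp add: add_nonneg_pos)
  then have "x - s / c = (x * c - s) / c" for s
    by (simp add: field_simps)
  then have "(x - s / c)\<^sup>2 = (x * c - s)\<^sup>2 / c\<^sup>2" for s
    by (simp add: power_divide)
  then have "iid_expectation I p k (\<lambda>J. (x - (\<Sum>i\<leftarrow>J. A i) / c)\<^sup>2)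
      = iid_expectation I p k (\<lambda>J. (x * c - (\<Sum>i\<leftarrow>J. A i))\<^sup>2) / c\<^sup>2"
    using iid_expectation_cmult[of I p k "1 / c\<^sup>2"] by simp
  also have "\<dots> = ((x * c - real k * x)\<^sup>2 + real k * ((\<Sum>i\<in>I. p i * (A i)\<^sup>2) - x\<^sup>2)) / c\<^sup>2"
    using iid_expectation_sq_dev[OF assms(1)] assms(2) by simp
  also have "\<dots> = real k * (\<Sum>i\<in>I. p i * (A i)\<^sup>2) / c\<^sup>2"
    unfolding c_def using assms(3) by (simp add: power2_eq_square algebra_simps)
  also have "\<dots> = (\<Sum>i\<in>I. p i * (A i)\<^sup>2) / (sqrt k + 1)\<^sup>2"
    unfolding c using sk by (simp add: power_mult_distrib)
  finally show ?thesis
    unfolding c_def .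
qed

lemma exists_le_iid_expectation:
  assumes "finite I" and "I \<noteq> {}" and "\<forall>i\<in>I. 0 \<le> p i" and "sum p I = 1"
  shows "\<exists>J. set J \<subseteq> I \<and> length J = k \<and> f J \<le> iid_expectation I p k f"
proof (induction k arbitrary: f)
  case (Suc k)
  define e where "e i = iid_expectation I p k (\<lambda>J. f (i # J))" for i
  have "Min (e ` I) \<in> e ` I"
    using assms(1,2) by simp
  then obtain i0 where i0: "i0 \<in> I" "e i0 = Min (e ` I)"
    by (metis imageE)
  have "e i0 = (\<Sum>i\<in>I. p i * e i0)"
    using assms(4) by (simp add: sum_distrib_right[symmetric])
  also have "\<dots> \<le> (\<Sum>i\<in>I. p i * e i)"
    using assms(1,3) i0 by (intro sum_mono mult_left_mono) auto
  finally have "e i0 \<le> iid_expectation I p (Suc k) f"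
    unfolding e_def by simp
  moreover obtain J where "set J \<subseteq> I" "length J = k" "f (i0 # J) \<le> e i0"
    using Suc[of "\<lambda>J. f (i0 # J)"] unfolding e_def by blast
  ultimately show ?case
    using i0(1) by (intro exI[of _ "i0 # J"]) auto
qed simp

lemma maurey_sparsification:
  assumes "finite I" and "I \<noteq> {}" and "\<forall>i\<in>I. 0 \<le> p i" and "sum p I = 1"
    and "\<forall>x<n. \<forall>y<m. (\<Sum>i\<in>I. p i * A i x y) = Z x y"
    and "\<forall>i\<in>I. frob n m (A i) \<le> \<alpha>" and "1 \<le> k"
  shows "\<exists>J. set J \<subseteq> I \<and> length J = k \<and>
           frob n m (msub Z (\<lambda>x y. (\<Sum>i\<leftarrow>J. A i x y) / (real k + sqrt k))) \<le> \<alpha> / (sqrt k + 1)"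
proof -
  define F where "F J = (frob n m (msub Z (\<lambda>x y. (\<Sum>i\<leftarrow>J. A i x y) / (real k + sqrt k))))\<^sup>2" for J
  have "iid_expectation I p k F
      = (\<Sum>x<n. \<Sum>y<m. iid_expectation I p k (\<lambda>J. (Z x y - (\<Sum>i\<leftarrow>J. A i x y) / (real k + sqrt k))\<^sup>2))"
    unfolding F_def frob_power2 msub_def by (simp add: iid_expectation_sum)
  also have "\<dots> = (\<Sum>x<n. \<Sum>y<m. (\<Sum>i\<in>I. p i * (A i x y)\<^sup>2) / (sqrt k + 1)\<^sup>2)"
    using assms(4,5,7) by (intro sum.cong refl iid_expectation_shrunk_mean) auto
  also have "\<dots> = (\<Sum>i\<in>I. p i * (frob n m (A i))\<^sup>2) / (sqrt k + 1)\<^sup>2"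
    unfolding frob_power2 sum_divide_distrib[symmetric]
    by (simp add: sum_distrib_left sum.swap[of _ I])
  also have "\<dots> \<le> (\<Sum>i\<in>I. p i * \<alpha>\<^sup>2) / (sqrt k + 1)\<^sup>2"
    using assms(3,6) by (intro divide_right_mono sum_mono mult_left_mono power_mono) (auto simp: frob_nonneg)
  also have "\<dots> = (\<alpha> / (sqrt k + 1))\<^sup>2"
    using assms(4) by (simp add: sum_distrib_right[symmetric] power_divide)
  finally have "iid_expectation I p k F \<le> (\<alpha> / (sqrt k + 1))\<^sup>2" .
  moreover obtain J where "set J \<subseteq> I" "length J = k" "F J \<le> iid_expectation I p k F"
    using exists_le_iid_expectation[OF assms(1-4)] by blast
  moreover have "0 \<le> \<alpha> / (sqrt k + 1)"
    using assms(2,6) frob_nonneg by (metis all_not_in_conv order_trans divide_nonneg_nonneg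
        add_nonneg_nonneg real_sqrt_ge_zero of_nat_0_le_iff zero_le_one)
  ultimately show ?thesis
    unfolding F_def by (blast intro: power2_le_imp_le order_trans)
qed

definition col_norm :: "nat \<Rightarrow> mat \<Rightarrow> nat \<Rightarrow> real" where
  "col_norm n Y a = sqrt (\<Sum>p<n. (Y p a)\<^sup>2)"

definition maurey_index :: "nat \<Rightarrow> nat \<Rightarrow> (nat \<times> nat \<times> bool) set" where
  "maurey_index dI dO = {..<dI} \<times> {..<dO} \<times> UNIV"

text \<open>A zero column of \<open>Y\<close> yields a zero atom, since \<open>x / 0 = 0\<close>.\<close>
fun maurey_atom :: "nat \<Rightarrow> mat \<Rightarrow> real \<Rightarrow> nat \<times> nat \<times> bool \<Rightarrow> mat" where
  "maurey_atom n Y \<alpha> (a, q, s) =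
     (\<lambda>p q'. if q' = q then (if s then \<alpha> else - \<alpha>) * (Y p a / col_norm n Y a) else 0)"

definition maurey_mass :: "nat \<Rightarrow> nat \<Rightarrow> nat \<Rightarrow> mat \<Rightarrow> real \<Rightarrow> mat \<Rightarrow> real" where
  "maurey_mass n dI dO Y \<alpha> V = (\<Sum>a<dI. \<Sum>q<dO. \<bar>V a q\<bar> * col_norm n Y a / \<alpha>)"

text \<open>The mass missing to a probability distribution is split evenly between two opposite atoms,
  so that it does not move the mean.\<close>
fun maurey_weight :: "nat \<Rightarrow> nat \<Rightarrow> nat \<Rightarrow> mat \<Rightarrow> real \<Rightarrow> mat \<Rightarrow> nat \<times> nat \<times> bool \<Rightarrow> real" where
  "maurey_weight n dI dO Y \<alpha> V (a, q, s) =
     (if s = (0 \<le> V a q) then \<bar>V a q\<bar> * col_norm n Y a / \<alpha> else 0)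
     + (if a = 0 \<and> q = 0 then (1 - maurey_mass n dI dO Y \<alpha> V) / 2 else 0)"

lemma sum_maurey_index:
  "(\<Sum>i\<in>maurey_index dI dO. g i) = (\<Sum>a<dI. \<Sum>q<dO. g (a, q, True) + g (a, q, False))"
  unfolding maurey_index_def by (simp add: sum.cartesian_product' UNIV_bool add.commute)

lemma maurey_mass_le_1:
  assumes "0 < \<alpha>" and "norm21 dI dO V * frob n dI Y \<le> \<alpha>"
  shows "maurey_mass n dI dO Y \<alpha> V \<le> 1"
proof -
  have "(\<Sum>a<dI. \<Sum>q<dO. \<bar>V a q\<bar> * col_norm n Y a) = (\<Sum>q<dO. \<Sum>a<dI. \<bar>V a q\<bar> * col_norm n Y a)"
    by (rule sum.swap)
  also have "\<dots> \<le> (\<Sum>q<dO. sqrt (\<Sum>a<dI. \<bar>V a q\<bar>\<^sup>2) * sqrt (\<Sum>a<dI. (col_norm n Y a)\<^sup>2))"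
    by (intro sum_mono sum_mult_le_sqrt)
  also have "\<dots> = norm21 dI dO V * frob n dI Y"
    unfolding norm21_def frob_def col_norm_def
    by (simp add: sum_nonneg sum_distrib_right sum.swap[of _ "{..<n}"])
  finally show ?thesis
    using assms unfolding maurey_mass_def
    by (simp add: sum_divide_distrib[symmetric] divide_le_eq_1)
qed

lemma col_norm_nonneg: "0 \<le> col_norm n Y a"
  unfolding col_norm_def by (simp add: sum_nonneg)

lemma maurey_weight_nonneg:
  assumes "0 < \<alpha>" and "maurey_mass n dI dO Y \<alpha> V \<le> 1"
  shows "0 \<le> maurey_weight n dI dO Y \<alpha> V i"
proof -
  have "0 \<le> \<bar>V a q\<bar> * col_norm n Y a / \<alpha>" for a q
    using assms(1) col_norm_nonneg[of n Y a] by simp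
  moreover have "0 \<le> (1 - maurey_mass n dI dO Y \<alpha> V) / 2"
    using assms(2) by simp
  ultimately show ?thesis
    by (cases i) (simp add: add_nonneg_nonneg)
qed

lemma sum_maurey_weight:
  assumes "0 < dI" and "0 < dO"
  shows "(\<Sum>i\<in>maurey_index dI dO. maurey_weight n dI dO Y \<alpha> V i) = 1"
proof -
  define T where "T = maurey_mass n dI dO Y \<alpha> V"
  have "(\<Sum>i\<in>maurey_index dI dO. maurey_weight n dI dO Y \<alpha> V i)
      = (\<Sum>a<dI. \<Sum>q<dO. \<bar>V a q\<bar> * col_norm n Y a / \<alpha> + (if a = 0 \<and> q = 0 then 1 - T else 0))"
    unfolding sum_maurey_index T_def by (intro sum.cong refl) auto
  also have "\<dots> = T + (\<Sum>a<dI. \<Sum>q<dO. if a = 0 \<and> q = 0 then 1 - T else 0)"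
    unfolding sum.distrib T_def maurey_mass_def ..
  also have "(\<Sum>a<dI. \<Sum>q<dO. if a = 0 \<and> q = 0 then 1 - T else 0) = (\<Sum>a<dI. if a = 0 then 1 - T else 0)"
    using assms(2) by (intro sum.cong refl) (simp add: sum.delta')
  finally show ?thesis
    using assms(1) by (simp add: sum.delta')
qed

lemma col_norm_eq_0: "col_norm n Y a = 0 \<Longrightarrow> p < n \<Longrightarrow> Y p a = 0"
  unfolding col_norm_def by (simp add: sum_nonneg_eq_0_iff)

lemma maurey_weight_mean:
  assumes "0 < \<alpha>" and "p0 < n" and "q0 < dO"
  shows "(\<Sum>i\<in>maurey_index dI dO. maurey_weight n dI dO Y \<alpha> V i * maurey_atom n Y \<alpha> i p0 q0)
       = mmul dI Y V p0 q0"
proof -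
  let ?w = "maurey_weight n dI dO Y \<alpha> V"
  have "(\<Sum>i\<in>maurey_index dI dO. ?w i * maurey_atom n Y \<alpha> i p0 q0)
      = (\<Sum>a<dI. \<Sum>q<dO. if q = q0 then \<alpha> * (Y p0 a / col_norm n Y a) * (?w (a, q, True) - ?w (a, q, False)) else 0)"
    unfolding sum_maurey_index by (intro sum.cong refl) (simp add: algebra_simps del: maurey_weight.simps)
  also have "\<dots> = (\<Sum>a<dI. \<alpha> * (Y p0 a / col_norm n Y a) * (?w (a, q0, True) - ?w (a, q0, False)))"
    using assms(3) by (simp add: sum.delta')
  also have "\<dots> = (\<Sum>a<dI. Y p0 a * V a q0)"
  proof (rule sum.cong[OF refl])
    fix a
    have w: "?w (a, q0, True) - ?w (a, q0, False) = V a q0 * col_norm n Y a / \<alpha>"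
      by (cases "0 \<le> V a q0") auto
    show "\<alpha> * (Y p0 a / col_norm n Y a) * (?w (a, q0, True) - ?w (a, q0, False)) = Y p0 a * V a q0"
    proof (cases "col_norm n Y a = 0")
      case True
      then show ?thesis
        using col_norm_eq_0[OF _ assms(2)] by simp
    next
      case False
      then show ?thesis
        unfolding w using assms(1) by (simp add: field_simps)
    qed
  qed
  finally show ?thesis
    unfolding mmul_def .
qed

lemma sum_col_normalized_le_1: "(\<Sum>p<n. (Y p a / col_norm n Y a)\<^sup>2) \<le> 1"
proof (cases "col_norm n Y a = 0")
  case False
  have "(col_norm n Y a)\<^sup>2 = (\<Sum>p<n. (Y p a)\<^sup>2)"
    unfolding col_norm_def by (simp add: sum_nonneg)
  then have "(\<Sum>p<n. (Y p a / col_norm n Y a)\<^sup>2) = (col_norm n Y a)\<^sup>2 / (col_norm n Y a)\<^sup>2"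
    by (simp add: power_divide sum_divide_distrib[symmetric])
  then show ?thesis
    using False by simp
qed simp

lemma frob_maurey_atom_le:
  assumes "0 \<le> \<alpha>" and "i \<in> maurey_index dI dO"
  shows "frob n dO (maurey_atom n Y \<alpha> i) \<le> \<alpha>"
proof -
  obtain a q s where i: "i = (a, q, s)" and q: "q < dO"
    using assms(2) unfolding maurey_index_def by auto
  have "(maurey_atom n Y \<alpha> i p q')\<^sup>2 = (if q' = q then \<alpha>\<^sup>2 * (Y p a / col_norm n Y a)\<^sup>2 else 0)" for p q'
    unfolding i by (cases s) (auto simp: power_mult_distrib power_divide)
  then have "(frob n dO (maurey_atom n Y \<alpha> i))\<^sup>2 = \<alpha>\<^sup>2 * (\<Sum>p<n. (Y p a / col_norm n Y a)\<^sup>2)"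
    unfolding frob_power2 using q by (simp add: sum.delta' sum_distrib_left)
  also have "\<dots> \<le> \<alpha>\<^sup>2"
    using sum_col_normalized_le_1 by (simp add: mult_left_le)
  finally show ?thesis
    using assms(1) by (rule power2_le_imp_le)
qed

section \<open>Covering a layer stage by stage\<close>

definition covers :: "nat \<Rightarrow> nat \<Rightarrow> real \<Rightarrow> mat set \<Rightarrow> mat set \<Rightarrow> bool" where
  "covers m k \<epsilon> C S \<longleftrightarrow> (\<forall>M\<in>S. \<exists>U\<in>C. frob m k (msub M U) \<le> \<epsilon>)"

lemma covers_mono: "covers m k \<epsilon> C S \<Longrightarrow> S' \<subseteq> S \<Longrightarrow> \<epsilon> \<le> \<epsilon>' \<Longrightarrow> covers m k \<epsilon>' C S'"
  unfolding covers_def by (meson order_trans subsetD)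

lemma maurey_center_close:
  assumes "1 \<le> k" and "0 < dI" and "0 < dO" and "0 < \<alpha>"
    and "norm21 dI dO V * frob n dI Y \<le> \<alpha>"
  shows "\<exists>J. set J \<subseteq> maurey_index dI dO \<and> length J = k \<and>
           frob n dO (msub (mmul dI Y V) (\<lambda>x y. (\<Sum>i\<leftarrow>J. maurey_atom n Y \<alpha> i x y) / (real k + sqrt k)))
             \<le> \<alpha> / (sqrt k + 1)"
proof (rule maurey_sparsification[OF _ _ _ sum_maurey_weight[OF assms(2,3)] _ _ assms(1)])
  show "finite (maurey_index dI dO)" and "maurey_index dI dO \<noteq> {}"
    using assms(2,3) unfolding maurey_index_def by auto
  have "maurey_mass n dI dO Y \<alpha> V \<le> 1"
    using maurey_mass_le_1[OF assms(4,5)] .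
  then show "\<forall>i\<in>maurey_index dI dO. 0 \<le> maurey_weight n dI dO Y \<alpha> V i"
    using maurey_weight_nonneg[OF assms(4)] by blast
  show "\<forall>x<n. \<forall>y<dO. (\<Sum>i\<in>maurey_index dI dO.
      maurey_weight n dI dO Y \<alpha> V i * maurey_atom n Y \<alpha> i x y) = mmul dI Y V x y"
    using maurey_weight_mean[OF assms(4)] by blast
  show "\<forall>i\<in>maurey_index dI dO. frob n dO (maurey_atom n Y \<alpha> i) \<le> \<alpha>"
    using frob_maurey_atom_le assms(4) by simp
qed

lemma card_maurey_index: "card (maurey_index dI dO) = 2 * dI * dO"
  unfolding maurey_index_def by (simp add: card_cartesian_product)

lemma maurey_cover_mmul:
  assumes "0 \<le> b" and "1 \<le> M" and "2 * dI * dO \<le> M"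
  shows "\<exists>C. finite C \<and> card C \<le> M ^ k \<and>
           covers n dO (frob n dI Y * b / (sqrt k + 1)) C {mmul dI Y V | V. norm21 dI dO V \<le> b}"
proof -
  define \<alpha> where "\<alpha> = frob n dI Y * b"
  have \<alpha>: "0 \<le> \<alpha>"
    unfolding \<alpha>_def using assms(1) frob_nonneg by simp
  have frob_YV: "frob n dO (mmul dI Y V) \<le> \<alpha>" if "norm21 dI dO V \<le> b" for V
    using frob_mmul_le[of n dO dI Y V] frob_le_norm21[of dI dO V] that frob_nonneg[of n dI Y]
    unfolding \<alpha>_def by (meson mult_left_mono order_trans)
  show ?thesis
  proof (cases "k = 0 \<or> \<alpha> = 0 \<or> dO = 0")
    case True
    have "covers n dO (\<alpha> / (sqrt k + 1)) {\<lambda>p q. 0} {mmul dI Y V | V. norm21 dI dO V \<le> b}"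
      unfolding covers_def using True frob_YV by auto
    then show ?thesis
      using assms(2) unfolding \<alpha>_def by (intro exI[of _ "{\<lambda>p q. 0}"]) simp
  next
    case False
    then have k: "1 \<le> k" and \<alpha>_pos: "0 < \<alpha>" and dO: "0 < dO"
      using \<alpha> by auto
    have dI: "0 < dI"
      using \<alpha>_pos unfolding \<alpha>_def frob_def by (cases "dI = 0") auto
    define LJ where "LJ = {J. set J \<subseteq> maurey_index dI dO \<and> length J = k}"
    define C where "C = (\<lambda>J x y. (\<Sum>i\<leftarrow>J. maurey_atom n Y \<alpha> i x y) / (real k + sqrt k)) ` LJ"
    have "finite (maurey_index dI dO)"
      unfolding maurey_index_def by simp
    then have fin: "finite LJ" and "card LJ = (2 * dI * dO) ^ k"
      unfolding LJ_def by (simp_all add: finite_lists_length_eq card_lists_length_eq card_maurey_index)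
    then have "card C \<le> (2 * dI * dO) ^ k"
      unfolding C_def using card_image_le[OF fin] by metis
    also have "\<dots> \<le> M ^ k"
      using assms(3) by (rule power_mono) simp
    finally have "card C \<le> M ^ k" .
    moreover have "covers n dO (\<alpha> / (sqrt k + 1)) C {mmul dI Y V | V. norm21 dI dO V \<le> b}"
      unfolding covers_def
    proof clarify
      fix V
      assume "norm21 dI dO V \<le> b"
      then have "norm21 dI dO V * frob n dI Y \<le> \<alpha>"
        unfolding \<alpha>_def using frob_nonneg by (metis mult.commute mult_left_mono)
      then show "\<exists>U\<in>C. frob n dO (msub (mmul dI Y V) U) \<le> \<alpha> / (sqrt k + 1)"
        using maurey_center_close[OF k dI dO \<alpha>_pos] unfolding C_def LJ_def by blast
    qed
    ultimately show ?thesis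
      using fin unfolding C_def \<alpha>_def by blast
  qed
qed

definition frob_ball_proj :: "nat \<Rightarrow> nat \<Rightarrow> real \<Rightarrow> mat \<Rightarrow> mat" where
  "frob_ball_proj m k R Y = (if frob m k Y \<le> R then Y else (\<lambda>p q. R / frob m k Y * Y p q))"

lemma frob_ball_proj_le: "0 \<le> R \<Longrightarrow> frob m k (frob_ball_proj m k R Y) \<le> R"
  using frob_scale[of m k "R / frob m k Y" Y] unfolding frob_ball_proj_def by auto

definition frob_inner :: "nat \<Rightarrow> nat \<Rightarrow> mat \<Rightarrow> mat \<Rightarrow> real" where
  "frob_inner m k M P = (\<Sum>p<m. \<Sum>q<k. M p q * P p q)"

lemma frob_inner_le: "frob_inner m k M P \<le> frob m k M * frob m k P"
proof -
  have "frob_inner m k M P \<le> (\<Sum>x\<in>{..<m} \<times> {..<k}. \<bar>(\<lambda>(p, q). M p q) x\<bar> * \<bar>(\<lambda>(p, q). P p q) x\<bar>)"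
    unfolding frob_inner_def sum.cartesian_product
    by (intro sum_mono) (auto simp: abs_mult[symmetric])
  also have "\<dots> \<le> frob m k M * frob m k P"
    unfolding frob_eq_L2_set by (rule L2_set_mult_ineq)
  finally show ?thesis .
qed

lemma frob_msub_scale_power2:
  "(frob m k (msub X (\<lambda>p q. c * Y p q)))\<^sup>2
     = (frob m k X)\<^sup>2 - 2 * c * frob_inner m k X Y + c\<^sup>2 * (frob m k Y)\<^sup>2"
  unfolding frob_power2 msub_def frob_inner_def
  by (simp add: power2_diff sum.distrib sum_subtractf sum_distrib_left power_mult_distrib mult_ac)

lemma frob_msub_ball_proj_le:
  assumes "frob m k X \<le> R"
  shows "frob m k (msub X (frob_ball_proj m k R Y)) \<le> frob m k (msub X Y)"
proof (cases "frob m k Y \<le> R")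
  case False
  define N where "N = frob m k Y"
  define c where "c = R / N"
  have "0 \<le> R" and "R < N"
    using assms False frob_nonneg[of m k X] unfolding N_def by auto
  then have c: "0 \<le> c" "c \<le> 1" and R: "R = c * N"
    unfolding c_def by auto
  have "2 * (1 - c) * frob_inner m k X Y \<le> 2 * (1 - c) * (c * N * N)"
    using frob_inner_le[of m k X Y] assms frob_nonneg[of m k Y] c unfolding R N_def
    by (intro mult_left_mono) (auto intro: order_trans mult_right_mono)
  also have "\<dots> = (1 - c\<^sup>2) * N\<^sup>2 - ((1 - c) * N)\<^sup>2"
    by (simp add: power2_eq_square algebra_simps)
  also have "\<dots> \<le> (1 - c\<^sup>2) * N\<^sup>2"
    by simp
  finally have "(frob m k (msub X (\<lambda>p q. c * Y p q)))\<^sup>2 \<le> (frob m k (msub X (\<lambda>p q. 1 * Y p q)))\<^sup>2"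
    unfolding frob_msub_scale_power2 N_def by (simp add: algebra_simps)
  then have "frob m k (msub X (\<lambda>p q. c * Y p q)) \<le> frob m k (msub X Y)"
    by (simp add: power2_le_iff_abs_le frob_nonneg)
  then show ?thesis
    using False unfolding frob_ball_proj_def c_def N_def by simp
qed (simp add: frob_ball_proj_def)

text \<open>Projecting the centres onto a ball keeps them small enough to serve as inputs of the next
  stage.\<close>
lemma maurey_cover_mmul_ball:
  assumes "0 \<le> b" and "0 \<le> R" and "1 \<le> M" and "2 * dI * dO \<le> M"
  shows "\<exists>C. finite C \<and> card C \<le> M ^ k \<and> (\<forall>c\<in>C. frob n dO c \<le> R) \<and>
           covers n dO (frob n dI Y * b / (sqrt k + 1)) C
             {mmul dI Y V | V. norm21 dI dO V \<le> b \<and> frob n dO (mmul dI Y V) \<le> R}"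
proof -
  obtain C where C: "finite C" "card C \<le> M ^ k"
    "covers n dO (frob n dI Y * b / (sqrt k + 1)) C {mmul dI Y V | V. norm21 dI dO V \<le> b}"
    using maurey_cover_mmul[OF assms(1,3,4)] by blast
  have "covers n dO (frob n dI Y * b / (sqrt k + 1)) (frob_ball_proj n dO R ` C)
          {mmul dI Y V | V. norm21 dI dO V \<le> b \<and> frob n dO (mmul dI Y V) \<le> R}"
    unfolding covers_def
  proof clarify
    fix V
    assume V: "norm21 dI dO V \<le> b" "frob n dO (mmul dI Y V) \<le> R"
    then obtain U where "U \<in> C" "frob n dO (msub (mmul dI Y V) U) \<le> frob n dI Y * b / (sqrt k + 1)"
      using C(3) unfolding covers_def by blast
    then show "\<exists>U'\<in>frob_ball_proj n dO R ` C.
        frob n dO (msub (mmul dI Y V) U') \<le> frob n dI Y * b / (sqrt k + 1)"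
      using frob_msub_ball_proj_le[OF V(2)] by (blast intro: order_trans)
  qed
  moreover have "card (frob_ball_proj n dO R ` C) \<le> M ^ k"
    using order.trans[OF card_image_le[OF C(1)] C(2)] .
  ultimately show ?thesis
    using C(1) frob_ball_proj_le[OF assms(2)] by blast
qed

lemma frob_msub_mmul_le:
  "frob n k (msub (mmul m Y V) U) \<le> specn m k V * frob n m (msub Y Y') + frob n k (msub (mmul m Y' V) U)"
proof -
  have "frob n k (msub (mmul m Y V) (mmul m Y' V)) \<le> specn m k V * frob n m (msub Y Y')"
    unfolding mmul_msub[symmetric] by (rule frob_mmul_right_le)
  then show ?thesis
    using frob_triangle[of n k "mmul m Y V" U "mmul m Y' V"] by linarith
qed

lemma cover_mmul_after_contraction:
  fixes g :: "mat \<Rightarrow> mat"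
  assumes g_lip: "\<And>c c'. frob n dI (msub (g c) (g c')) \<le> frob n dI (msub c c')"
    and g_norm: "\<And>c. frob n dI (g c) \<le> frob n dI c"
    and C: "finite C" "card C \<le> K" "\<forall>c\<in>C. frob n dI c \<le> \<beta>" "covers n dI \<delta> C S"
    and "0 \<le> \<beta>" and "0 \<le> \<kappa>" and "0 \<le> b" and e: "\<beta> * b / (sqrt k + 1) \<le> e"
    and "1 \<le> M" and "2 * dI * dO \<le> M"
  shows "\<exists>C'. finite C' \<and> card C' \<le> K * M ^ k \<and> (\<forall>c\<in>C'. frob n dO c \<le> \<beta> * \<kappa>) \<and>
           covers n dO (\<kappa> * \<delta> + e) C'
             {mmul dI (g Z) V | Z V. Z \<in> S \<and> specn dI dO V \<le> \<kappa> \<and> norm21 dI dO V \<le> b}"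
proof -
  have "\<forall>c\<in>C. \<exists>F. finite F \<and> card F \<le> M ^ k \<and> (\<forall>c'\<in>F. frob n dO c' \<le> \<beta> * \<kappa>) \<and>
          covers n dO (frob n dI (g c) * b / (sqrt k + 1)) F
            {mmul dI (g c) V | V. norm21 dI dO V \<le> b \<and> frob n dO (mmul dI (g c) V) \<le> \<beta> * \<kappa>}"
    using maurey_cover_mmul_ball[OF \<open>0 \<le> b\<close> _ \<open>1 \<le> M\<close> \<open>2 * dI * dO \<le> M\<close>] assms(7,8) by simp
  from bchoice[OF this] obtain F where F: "\<forall>c\<in>C. finite (F c) \<and> card (F c) \<le> M ^ k \<and>
      (\<forall>c'\<in>F c. frob n dO c' \<le> \<beta> * \<kappa>) \<and>
      covers n dO (frob n dI (g c) * b / (sqrt k + 1)) (F c)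
        {mmul dI (g c) V | V. norm21 dI dO V \<le> b \<and> frob n dO (mmul dI (g c) V) \<le> \<beta> * \<kappa>}" ..
  define C' where "C' = (\<Union>c\<in>C. F c)"
  have "card C' \<le> (\<Sum>c\<in>C. card (F c))"
    unfolding C'_def using C(1) by (rule card_UN_le)
  also have "\<dots> \<le> card C * M ^ k"
    using sum_bounded_above[of C "\<lambda>c. card (F c)" "M ^ k"] F by simp
  also have "\<dots> \<le> K * M ^ k"
    using C(2) by simp
  finally have card: "card C' \<le> K * M ^ k" .
  have "covers n dO (\<kappa> * \<delta> + e) C'
          {mmul dI (g Z) V | Z V. Z \<in> S \<and> specn dI dO V \<le> \<kappa> \<and> norm21 dI dO V \<le> b}"
    unfolding covers_def
  proof clarify
    fix Z V
    assume Z: "Z \<in> S" and V: "specn dI dO V \<le> \<kappa>" "norm21 dI dO V \<le> b"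
    obtain c where c: "c \<in> C" "frob n dI (msub Z c) \<le> \<delta>"
      using C(4) Z unfolding covers_def by blast
    have gc: "frob n dI (g c) \<le> \<beta>"
      using g_norm[of c] C(3) c(1) by (blast intro: order_trans)
    have "frob n dO (mmul dI (g c) V) \<le> specn dI dO V * frob n dI (g c)"
      by (rule frob_mmul_right_le)
    also have "\<dots> \<le> \<kappa> * \<beta>"
      by (rule mult_mono[OF V(1) gc \<open>0 \<le> \<kappa>\<close> frob_nonneg])
    finally have "frob n dO (mmul dI (g c) V) \<le> \<beta> * \<kappa>"
      by (simp only: mult.commute)
    then obtain c' where c': "c' \<in> F c"
      "frob n dO (msub (mmul dI (g c) V) c') \<le> frob n dI (g c) * b / (sqrt k + 1)"
      using bspec[OF F c(1)] V(2) unfolding covers_def by blast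
    have "frob n dI (g c) * b / (sqrt k + 1) \<le> \<beta> * b / (sqrt k + 1)"
      using gc \<open>0 \<le> b\<close> by (intro divide_right_mono mult_right_mono) auto
    with c'(2) e have "frob n dO (msub (mmul dI (g c) V) c') \<le> e"
      by linarith
    moreover have "specn dI dO V * frob n dI (msub (g Z) (g c)) \<le> \<kappa> * \<delta>"
      by (rule mult_mono[OF V(1) order_trans[OF g_lip c(2)] \<open>0 \<le> \<kappa>\<close> frob_nonneg])
    ultimately have "frob n dO (msub (mmul dI (g Z) V) c') \<le> \<kappa> * \<delta> + e"
      using frob_msub_mmul_le[of n dO dI "g Z" V c' "g c"] by linarith
    then show "\<exists>U\<in>C'. frob n dO (msub (mmul dI (g Z) V) U) \<le> \<kappa> * \<delta> + e"
      using c'(1) c(1) unfolding C'_def by blast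
  qed
  moreover have "finite C'" and "\<forall>c\<in>C'. frob n dO c \<le> \<beta> * \<kappa>"
    using C(1) F unfolding C'_def by auto
  ultimately show ?thesis
    using card by blast
qed

lemma gin_stage_Suc_subset:
  "{gin_stage \<sigma> At n d V H (Suc j) | V. weights_ok (Suc j) d \<kappa> b V}
     \<subseteq> {mmul (d j) (if j = 0 then Z else (\<lambda>p q. \<sigma> (Z p q))) W | Z W.
          Z \<in> {gin_stage \<sigma> At n d V H j | V. weights_ok j d \<kappa> b V}
          \<and> specn (d j) (d (Suc j)) W \<le> \<kappa> (Suc j) \<and> norm21 (d j) (d (Suc j)) W \<le> b (Suc j)}"
proof clarify
  fix V
  assume V: "weights_ok (Suc j) d \<kappa> b V"
  then have "weights_ok j d \<kappa> b V"
    unfolding weights_ok_def by auto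
  moreover have "specn (d j) (d (Suc j)) (V (Suc j)) \<le> \<kappa> (Suc j) \<and>
      norm21 (d j) (d (Suc j)) (V (Suc j)) \<le> b (Suc j)"
    using bspec[OF V[unfolded weights_ok_def], of "Suc j"] by simp
  moreover have "gin_stage \<sigma> At n d V H (Suc j)
      = mmul (d j) (if j = 0 then gin_stage \<sigma> At n d V H j else (\<lambda>p q. \<sigma> (gin_stage \<sigma> At n d V H j p q)))
          (V (Suc j))"
    by (cases "j = 0") simp_all
  ultimately show "\<exists>Z W. gin_stage \<sigma> At n d V H (Suc j)
        = mmul (d j) (if j = 0 then Z else (\<lambda>p q. \<sigma> (Z p q))) W
      \<and> Z \<in> {gin_stage \<sigma> At n d V H j | V. weights_ok j d \<kappa> b V}
      \<and> specn (d j) (d (Suc j)) W \<le> \<kappa> (Suc j) \<and> norm21 (d j) (d (Suc j)) W \<le> b (Suc j)"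
    by blast
qed

lemma gin_stage_cover:
  assumes "\<forall>x y. \<bar>\<sigma> x - \<sigma> y\<bar> \<le> \<bar>x - y\<bar>" and "\<sigma> 0 = 0"
    and "1 \<le> M" and "\<forall>i\<in>{1..r}. 2 * d (i - 1) * d i \<le> M"
    and "frob n (d 0) (mmul n At H) \<le> B"
    and "\<forall>i\<in>{1..r}. 0 \<le> \<kappa> i" and "\<forall>i\<in>{1..r}. 0 \<le> b i"
    and "\<forall>i\<in>{1..r}. B * (\<Prod>t=1..i-1. \<kappa> t) * b i / (sqrt (k i) + 1) \<le> e i"
    and "0 \<le> \<delta> 0" and "\<forall>j<r. \<kappa> (Suc j) * \<delta> j + e (Suc j) \<le> \<delta> (Suc j)"
  shows "j \<le> r \<Longrightarrow> \<exists>C. finite C \<and> card C \<le> M ^ (\<Sum>i=1..j. k i) \<and>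
           (\<forall>c\<in>C. frob n (d j) c \<le> B * (\<Prod>i=1..j. \<kappa> i)) \<and>
           covers n (d j) (\<delta> j) C {gin_stage \<sigma> At n d V H j | V. weights_ok j d \<kappa> b V}"
proof (induction j)
  case 0
  have "covers n (d 0) (\<delta> 0) {mmul n At H} {gin_stage \<sigma> At n d V H 0 | V. weights_ok 0 d \<kappa> b V}"
    using assms(9) unfolding covers_def by auto
  then show ?case
    using assms(5) by (intro exI[of _ "{mmul n At H}"]) simp
next
  case (Suc j)
  define S where "S = {gin_stage \<sigma> At n d V H j | V. weights_ok j d \<kappa> b V}"
  define \<beta> where "\<beta> = B * (\<Prod>i=1..j. \<kappa> i)"
  define g where "g c = (if j = 0 then c else (\<lambda>p q. \<sigma> (c p q)))" for c :: mat
  obtain C where C: "finite C" "card C \<le> M ^ (\<Sum>i=1..j. k i)" "\<forall>c\<in>C. frob n (d j) c \<le> \<beta>"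
      "covers n (d j) (\<delta> j) C S"
    using Suc unfolding S_def \<beta>_def by auto
  have j: "Suc j \<in> {1..r}"
    using Suc.prems by simp
  have "0 \<le> B"
    using assms(5) frob_nonneg order_trans by blast
  then have "0 \<le> \<beta>"
    unfolding \<beta>_def using assms(6) Suc.prems by (intro mult_nonneg_nonneg prod_nonneg) auto
  have g_lip: "frob n (d j) (msub (g c) (g c')) \<le> frob n (d j) (msub c c')" for c c'
    unfolding g_def using frob_msub_map_le[OF assms(1)] by simp
  have g_norm: "frob n (d j) (g c) \<le> frob n (d j) c" for c
    unfolding g_def using frob_map_le[OF assms(1,2)] by simp
  have \<kappa>: "0 \<le> \<kappa> (Suc j)" and b: "0 \<le> b (Suc j)" and M: "2 * d j * d (Suc j) \<le> M"
    using bspec[OF assms(6) j] bspec[OF assms(7) j] bspec[OF assms(4) j] by simp_all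
  have e: "\<beta> * b (Suc j) / (sqrt (k (Suc j)) + 1) \<le> e (Suc j)"
    using bspec[OF assms(8) j] unfolding \<beta>_def by simp
  obtain C' where C': "finite C'" "card C' \<le> M ^ (\<Sum>i=1..j. k i) * M ^ k (Suc j)"
      "\<forall>c\<in>C'. frob n (d (Suc j)) c \<le> \<beta> * \<kappa> (Suc j)"
      "covers n (d (Suc j)) (\<kappa> (Suc j) * \<delta> j + e (Suc j)) C'
         {mmul (d j) (g Z) V | Z V. Z \<in> S \<and> specn (d j) (d (Suc j)) V \<le> \<kappa> (Suc j)
            \<and> norm21 (d j) (d (Suc j)) V \<le> b (Suc j)}"
    using cover_mmul_after_contraction[OF g_lip g_norm C \<open>0 \<le> \<beta>\<close> \<kappa> b e assms(3) M] by blast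
  have "{gin_stage \<sigma> At n d V H (Suc j) | V. weights_ok (Suc j) d \<kappa> b V}
      \<subseteq> {mmul (d j) (g Z) V | Z V. Z \<in> S \<and> specn (d j) (d (Suc j)) V \<le> \<kappa> (Suc j)
            \<and> norm21 (d j) (d (Suc j)) V \<le> b (Suc j)}"
    unfolding S_def g_def by (rule gin_stage_Suc_subset)
  then have "covers n (d (Suc j)) (\<delta> (Suc j)) C'
      {gin_stage \<sigma> At n d V H (Suc j) | V. weights_ok (Suc j) d \<kappa> b V}"
    by (rule covers_mono[OF C'(4)]) (use assms(10) Suc.prems in simp)
  moreover have "M ^ (\<Sum>i=1..Suc j. k i) = M ^ (\<Sum>i=1..j. k i) * M ^ k (Suc j)"
    by (simp add: power_add)
  moreover have "B * (\<Prod>i=1..Suc j. \<kappa> i) = \<beta> * \<kappa> (Suc j)"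
    unfolding \<beta>_def by simp
  ultimately show ?case
    using C'(1-3) by (intro exI[of _ C']) (simp only:)
qed

section \<open>Choice of the sample counts\<close>

text \<open>Using \<open>\<lceil>(\<surd>t - 1)\<^sup>2\<rceil>\<close> rather than \<open>\<lceil>t\<rceil>\<close> samples keeps the count below \<open>t\<close>, so that no
  rounding term enters the final bound.\<close>
definition sample_count :: "real \<Rightarrow> nat" where
  "sample_count t = (if t \<le> 1 then 0 else nat \<lceil>(sqrt t - 1)\<^sup>2\<rceil>)"

lemma sample_count_bounds:
  assumes "0 \<le> t"
  shows "real (sample_count t) \<le> t" and "sqrt t \<le> sqrt (sample_count t) + 1"
proof -
  have "real (sample_count t) \<le> t \<and> sqrt t \<le> sqrt (sample_count t) + 1"
  proof (cases "t \<le> 1")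
    case False
    define y where "y = (sqrt t - 1)\<^sup>2"
    have t: "1 \<le> sqrt t"
      using False by simp
    have k: "real (sample_count t) = of_int \<lceil>y\<rceil>"
      using False unfolding sample_count_def y_def by simp
    have "of_int \<lceil>y\<rceil> < y + 1"
      by linarith
    also have "y + 1 = t - 2 * sqrt t + 2"
      unfolding y_def using assms by (simp add: power2_diff)
    finally have "of_int \<lceil>y\<rceil> \<le> t"
      using t by linarith
    moreover have "sqrt t - 1 \<le> sqrt (of_int \<lceil>y\<rceil>)"
      using t unfolding y_def by (simp add: real_le_rsqrt)
    ultimately show ?thesis
      unfolding k by simp
  qed (use assms in \<open>simp add: sample_count_def\<close>)
  then show "real (sample_count t) \<le> t" and "sqrt t \<le> sqrt (sample_count t) + 1"
    by auto
qed

lemma div_sqrt_sample_count_le: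
  assumes "0 \<le> q" and "0 \<le> e" and "e = 0 \<Longrightarrow> q = 0"
  shows "q / (sqrt (sample_count ((q / e)\<^sup>2)) + 1) \<le> e"
proof (cases "e = 0")
  case False
  then have "q / e \<le> sqrt (sample_count ((q / e)\<^sup>2)) + 1"
    using sample_count_bounds(2)[of "(q / e)\<^sup>2"] assms(1,2) by simp
  then have "q \<le> e * (sqrt (sample_count ((q / e)\<^sup>2)) + 1)"
    using False assms(2) by (simp add: divide_le_eq mult.commute)
  then show ?thesis
    by (simp add: divide_le_eq add_nonneg_pos mult.commute)
qed (use assms(3) in simp)

lemma powr_two_thirds_ratio:
  assumes "0 \<le> (x :: real)"
  shows "(x / x powr (2/3))\<^sup>2 = x powr (2/3)"
proof (cases "x = 0")
  case False
  then have "x powr (1/3) * x powr (2/3) = x"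
    using assms by (simp flip: powr_add)
  then have "x / x powr (2/3) = x powr (1/3)"
    using False assms by (simp add: field_simps)
  then show ?thesis
    using assms by (simp add: power2_eq_square flip: powr_add)
qed simp

lemma powr_three_halves_power2:
  assumes "0 \<le> (s :: real)"
  shows "(s powr (3/2))\<^sup>2 = s ^ 3"
proof (cases "s = 0")
  case False
  then have "(s powr (3/2))\<^sup>2 = s powr 3"
    using assms by (simp add: powr_power)
  then show ?thesis
    using assms by simp
qed simp

lemma prod_split_at:
  fixes f :: "nat \<Rightarrow> real"
  assumes "i \<in> {1..r}"
  shows "(\<Prod>t=1..i-1. f t) * f i * (\<Prod>t=Suc i..r. f t) = (\<Prod>t=1..r. f t)"
proof -
  have "(\<Prod>t=1..i-1. f t) * f i = (\<Prod>t=1..i. f t)"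
    using assms by (cases i) (simp_all add: prod.nat_ivl_Suc')
  also have "\<dots> * (\<Prod>t=Suc i..r. f t) = (\<Prod>t=1..r. f t)"
    using assms prod.ub_add_nat[of 1 i f "r - i"] by simp
  finally show ?thesis .
qed

lemma stage_sample_ratio:
  fixes \<kappa> :: "nat \<Rightarrow> real"
  assumes "i \<in> {1..r}" and "0 < \<kappa> i" and "0 \<le> b"
  defines "a \<equiv> (b / \<kappa> i) powr (2/3)"
  shows "(B * (\<Prod>t=1..i-1. \<kappa> t) * b / (\<epsilon> * a / (S * (\<Prod>t=Suc i..r. \<kappa> t))))\<^sup>2
           = (B * (\<Prod>t=1..r. \<kappa> t) * S / \<epsilon>)\<^sup>2 * a"
proof -
  have "B * (\<Prod>t=1..i-1. \<kappa> t) * b * (S * (\<Prod>t=Suc i..r. \<kappa> t))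
      = B * ((\<Prod>t=1..i-1. \<kappa> t) * \<kappa> i * (\<Prod>t=Suc i..r. \<kappa> t)) * S * (b / \<kappa> i)"
    using assms(2) by (simp add: field_simps)
  then have "B * (\<Prod>t=1..i-1. \<kappa> t) * b / (\<epsilon> * a / (S * (\<Prod>t=Suc i..r. \<kappa> t)))
      = B * (\<Prod>t=1..r. \<kappa> t) * S / \<epsilon> * (b / \<kappa> i / a)"
    unfolding prod_split_at[OF assms(1)] by (simp add: divide_divide_eq_right)
  moreover have "(b / \<kappa> i / a)\<^sup>2 = a"
    unfolding a_def using assms(2,3) by (intro powr_two_thirds_ratio) simp
  ultimately show ?thesis
    by (simp only: power_mult_distrib)
qed

text \<open>The total error is split among the stages proportionally to \<open>(b\<^sub>i/\<kappa>\<^sub>i)\<^sup>2\<^sup>/\<^sup>3\<close>, the share of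
  stage \<open>i\<close> being divided by the spectral norms \<open>\<kappa>\<^sub>i\<^sub>+\<^sub>1 \<dots> \<kappa>\<^sub>r\<close> that will amplify it. This choice
  minimises the total number of samples, which becomes proportional to \<open>\<tau>\<^sup>2\<close>.\<close>
lemma error_budget:
  fixes \<kappa> b :: "nat \<Rightarrow> real"
  assumes \<kappa>: "\<forall>i\<in>{1..r}. 0 < \<kappa> i" and b: "\<forall>i\<in>{1..r}. 0 \<le> b i" and "0 \<le> B" and "0 < \<epsilon>"
  obtains k :: "nat \<Rightarrow> nat" and e \<delta> :: "nat \<Rightarrow> real"
  where "\<delta> 0 = 0" and "\<forall>j<r. \<kappa> (Suc j) * \<delta> j + e (Suc j) \<le> \<delta> (Suc j)" and "\<delta> r \<le> \<epsilon>"
    and "\<forall>i\<in>{1..r}. B * (\<Prod>t=1..i-1. \<kappa> t) * b i / (sqrt (k i) + 1) \<le> e i"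
    and "real (\<Sum>i=1..r. k i) \<le> (B * (\<Prod>i=1..r. \<kappa> i))\<^sup>2 * (\<Sum>i=1..r. (b i / \<kappa> i) powr (2/3)) ^ 3 / \<epsilon>\<^sup>2"
proof -
  define a where "a i = (b i / \<kappa> i) powr (2/3)" for i
  define S where "S = (\<Sum>i=1..r. a i)"
  define tail where "tail j = (\<Prod>t=Suc j..r. \<kappa> t)" for j
  define e where "e i = \<epsilon> * a i / (S * tail i)" for i
  define \<delta> where "\<delta> j = \<epsilon> * (\<Sum>i=1..j. a i) / (S * tail j)" for j
  define q where "q i = B * (\<Prod>t=1..i-1. \<kappa> t) * b i" for i
  define k where "k i = sample_count ((q i / e i)\<^sup>2)" for i
  have tail: "0 < tail j" for j
    unfolding tail_def using \<kappa> by (intro prod_pos) auto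
  have S: "0 \<le> S"
    unfolding S_def a_def by (simp add: sum_nonneg)
  have "\<kappa> (Suc j) * \<delta> j + e (Suc j) = \<delta> (Suc j)" if "j < r" for j
  proof -
    have "tail j = \<kappa> (Suc j) * tail (Suc j)"
      unfolding tail_def using that by (simp add: prod.atLeast_Suc_atMost)
    moreover have "0 < \<kappa> (Suc j)"
      using \<kappa> that by simp
    ultimately show ?thesis
      using tail[of "Suc j"] unfolding \<delta>_def e_def
      by (cases "S = 0") (simp_all add: field_simps)
  qed
  moreover have "\<delta> r \<le> \<epsilon>"
    using \<open>0 < \<epsilon>\<close> S unfolding \<delta>_def tail_def S_def[symmetric] by (cases "S = 0") simp_all
  moreover have "q i / (sqrt (k i) + 1) \<le> e i" if i: "i \<in> {1..r}" for i
  proof (rule div_sqrt_sample_count_le[of "q i" "e i", folded k_def])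
    show "0 \<le> q i"
      unfolding q_def using i \<kappa> b \<open>0 \<le> B\<close> by (intro mult_nonneg_nonneg prod_nonneg) (auto intro: less_imp_le)
    show "0 \<le> e i"
      unfolding e_def a_def using \<open>0 < \<epsilon>\<close> S tail[of i] by simp
    assume "e i = 0"
    then have "a i = 0"
      using \<open>0 < \<epsilon>\<close> tail[of i] S i sum_nonneg_eq_0_iff[of "{1..r}" a]
      unfolding e_def S_def a_def by auto
    moreover have "0 < \<kappa> i"
      using i \<kappa> by simp
    ultimately show "q i = 0"
      unfolding a_def q_def by simp
  qed
  moreover have "real (\<Sum>i=1..r. k i) \<le> (B * (\<Prod>i=1..r. \<kappa> i))\<^sup>2 * S ^ 3 / \<epsilon>\<^sup>2"
  proof -
    have "(q i / e i)\<^sup>2 = (B * (\<Prod>i=1..r. \<kappa> i) * S / \<epsilon>)\<^sup>2 * a i" if "i \<in> {1..r}" for i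
      unfolding q_def e_def tail_def a_def using that \<kappa> b by (intro stage_sample_ratio) auto
    then have "(\<Sum>i=1..r. (q i / e i)\<^sup>2) = (\<Sum>i=1..r. (B * (\<Prod>i=1..r. \<kappa> i) * S / \<epsilon>)\<^sup>2 * a i)"
      by (intro sum.cong) simp_all
    moreover have "real (\<Sum>i=1..r. k i) \<le> (\<Sum>i=1..r. (q i / e i)\<^sup>2)"
      unfolding k_def of_nat_sum by (intro sum_mono sample_count_bounds(1)) simp
    ultimately have "real (\<Sum>i=1..r. k i) \<le> (\<Sum>i=1..r. (B * (\<Prod>i=1..r. \<kappa> i) * S / \<epsilon>)\<^sup>2 * a i)"
      by simp
    also have "\<dots> = (B * (\<Prod>i=1..r. \<kappa> i))\<^sup>2 * S ^ 3 / \<epsilon>\<^sup>2"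
      unfolding S_def[symmetric] sum_distrib_left[symmetric]
      by (simp add: power_mult_distrib power_divide power3_eq_cube power2_eq_square)
    finally show ?thesis .
  qed
  ultimately show ?thesis
    using that[of \<delta> e k] unfolding q_def S_def a_def by (simp add: \<delta>_def)
qed

section \<open>The covering number bound\<close>

lemma gin_layer_cover:
  assumes "\<forall>x y. \<bar>\<sigma> x - \<sigma> y\<bar> \<le> \<bar>x - y\<bar>" and "\<sigma> 0 = 0"
    and "1 \<le> M" and "\<forall>i\<in>{1..r}. 2 * d (i - 1) * d i \<le> M"
    and "frob n (d 0) (mmul n At H) \<le> B"
    and "\<forall>i\<in>{1..r}. 0 < \<kappa> i" and "\<forall>i\<in>{1..r}. 0 \<le> b i" and "0 < \<epsilon>"
  shows "\<exists>C K. finite C \<and> card C \<le> M ^ K \<and>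
           real K \<le> (B * (\<Prod>i=1..r. \<kappa> i))\<^sup>2 * ((\<Sum>i=1..r. (b i / \<kappa> i) powr (2/3)) powr (3/2))\<^sup>2 / \<epsilon>\<^sup>2 \<and>
           covers n (d r) \<epsilon> C {gin_layer \<sigma> At n r d V H | V. weights_ok r d \<kappa> b V}"
proof -
  have "0 \<le> B"
    using assms(5) frob_nonneg order_trans by blast
  then obtain k e \<delta> where \<delta>: "\<delta> 0 = 0" "\<forall>j<r. \<kappa> (Suc j) * \<delta> j + e (Suc j) \<le> \<delta> (Suc j)" "\<delta> r \<le> \<epsilon>"
    and e: "\<forall>i\<in>{1..r}. B * (\<Prod>t=1..i-1. \<kappa> t) * b i / (sqrt (k i) + 1) \<le> e i"
    and K: "real (\<Sum>i=1..r. k i)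
              \<le> (B * (\<Prod>i=1..r. \<kappa> i))\<^sup>2 * (\<Sum>i=1..r. (b i / \<kappa> i) powr (2/3)) ^ 3 / \<epsilon>\<^sup>2"
    by (rule error_budget[OF assms(6,7) _ assms(8)])
  have "\<forall>i\<in>{1..r}. 0 \<le> \<kappa> i" and "0 \<le> \<delta> 0"
    using assms(6) \<delta>(1) by (simp_all add: less_imp_le)
  then have "\<exists>C. finite C \<and> card C \<le> M ^ (\<Sum>i=1..r. k i) \<and>
      (\<forall>c\<in>C. frob n (d r) c \<le> B * (\<Prod>i=1..r. \<kappa> i)) \<and>
      covers n (d r) (\<delta> r) C {gin_stage \<sigma> At n d V H r | V. weights_ok r d \<kappa> b V}"
    by (intro gin_stage_cover[OF assms(1-5) _ assms(7) e _ \<delta>(2)]) simp_all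
  then obtain C where C: "finite C" "card C \<le> M ^ (\<Sum>i=1..r. k i)"
      "covers n (d r) \<epsilon> C {gin_layer \<sigma> At n r d V H | V. weights_ok r d \<kappa> b V}"
    unfolding gin_layer_def using covers_mono[OF _ order_refl \<delta>(3)] by blast
  have "((\<Sum>i=1..r. (b i / \<kappa> i) powr (2/3)) powr (3/2))\<^sup>2 = (\<Sum>i=1..r. (b i / \<kappa> i) powr (2/3)) ^ 3"
    by (simp add: powr_three_halves_power2 sum_nonneg)
  then show ?thesis
    using C K by (intro exI[of _ C] exI[of _ "\<Sum>i=1..r. k i"]) simp
qed

lemma ln_covering_number_le:
  assumes "finite C" and "card C \<le> M ^ K" and "1 \<le> M" and "real K \<le> R" and "covers m k \<epsilon> C S"
  shows "covering_number \<epsilon> S m k \<noteq> \<infinity> \<and>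
         ln (real (the_enat (covering_number \<epsilon> S m k))) \<le> R * ln (real M)"
proof -
  have "covering_number \<epsilon> S m k \<le> enat (card C)"
    unfolding covering_number_def using assms(1,5) unfolding covers_def by (intro INF_lower) auto
  then obtain N where N: "covering_number \<epsilon> S m k = enat N" "N \<le> card C"
    by (cases "covering_number \<epsilon> S m k") auto
  have "ln (real N) \<le> real K * ln (real M)"
  proof (cases "N = 0")
    case False
    then have "ln (real N) \<le> ln (real (M ^ K))"
      using N(2) assms(2,3) by simp
    also have "\<dots> = real K * ln (real M)"
      using assms(3) by (simp add: ln_realpow)
    finally show ?thesis .
  qed (use assms(3) in simp)
  also have "\<dots> \<le> R * ln (real M)"
    using assms(3,4) by (intro mult_right_mono) simp_all
  finally show ?thesis
    using N(1) by simp
qed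

lemma ln_covering_number_gin_layer_le:
  assumes "\<forall>x y. \<bar>\<sigma> x - \<sigma> y\<bar> \<le> \<bar>x - y\<bar>" and "\<sigma> 0 = 0"
    and "1 \<le> M" and "\<forall>i\<in>{1..r}. 2 * d (i - 1) * d i \<le> M"
    and "frob n (d 0) (mmul n At H) \<le> B"
    and "\<forall>i\<in>{1..r}. 0 < \<kappa> i" and "\<forall>i\<in>{1..r}. 0 \<le> b i" and "0 < \<epsilon>"
  defines "S \<equiv> {gin_layer \<sigma> At n r d V H | V. weights_ok r d \<kappa> b V}"
  shows "covering_number \<epsilon> S n (d r) \<noteq> \<infinity> \<and>
         ln (real (the_enat (covering_number \<epsilon> S n (d r))))
           \<le> (B * (\<Prod>i=1..r. \<kappa> i))\<^sup>2 * ((\<Sum>i=1..r. (b i / \<kappa> i) powr (2/3)) powr (3/2))\<^sup>2 / \<epsilon>\<^sup>2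
              * ln (real M)"
proof -
  obtain C K where "finite C" "card C \<le> M ^ K"
    "real K \<le> (B * (\<Prod>i=1..r. \<kappa> i))\<^sup>2 * ((\<Sum>i=1..r. (b i / \<kappa> i) powr (2/3)) powr (3/2))\<^sup>2 / \<epsilon>\<^sup>2"
    "covers n (d r) \<epsilon> C S"
    using gin_layer_cover[OF assms(1-8)] unfolding S_def by blast
  then show ?thesis
    using ln_covering_number_le assms(3) by blast
qed

lemma two_mult_dims_le:
  fixes d :: "nat \<Rightarrow> nat \<Rightarrow> nat"
  assumes "l \<in> {1..L}"
  shows "\<forall>i\<in>{1..r}. 2 * d l (i - 1) * d l i \<le> max 1 (2 * (Max {d k i | k i. k \<in> {1..L} \<and> i \<in> {0..r}})\<^sup>2)"
proof
  fix i
  assume i: "i \<in> {1..r}"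
  define D where "D = Max {d k i | k i. k \<in> {1..L} \<and> i \<in> {0..r}}"
  have "finite {d k i | k i. k \<in> {1..L} \<and> i \<in> {0..r}}"
    by (rule finite_subset[of _ "(\<lambda>(k, i). d k i) ` ({1..L} \<times> {0..r})"]) auto
  then have "d l j \<le> D" if "j \<le> r" for j
    unfolding D_def using assms that by (intro Max_ge) auto
  then have "2 * d l (i - 1) * d l i \<le> 2 * D * D"
    using i by (intro mult_le_mono) auto
  then show "2 * d l (i - 1) * d l i \<le> max 1 (2 * D\<^sup>2)"
    by (simp add: power2_eq_square mult.assoc)
qed

theorem mainTheorem7:
  fixes N :: nat and n :: "nat \<Rightarrow> nat" and Ag Xg :: "nat \<Rightarrow> mat" and d0 :: nat
    and \<sigma> :: "real \<Rightarrow> real" and L r l :: nat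
    and d :: "nat \<Rightarrow> nat \<Rightarrow> nat" and \<kappa> b :: "nat \<Rightarrow> nat \<Rightarrow> real"
    and W :: "nat \<Rightarrow> nat \<Rightarrow> mat" and \<epsilon> :: real
  defines "A \<equiv> blockdiag N n Ag"
      and "X \<equiv> vstack N n Xg"
      and "ntot \<equiv> (\<Sum>i<N. n i)"
  assumes graphs01: "\<forall>i<N. \<forall>p<n i. \<forall>q<n i. Ag i p q \<in> {0, 1}"
      and graphs_sym: "\<forall>i<N. \<forall>p<n i. \<forall>q<n i. Ag i p q = Ag i q p"
      and sigma_lip: "\<forall>x y. \<bar>\<sigma> x - \<sigma> y\<bar> \<le> \<bar>x - y\<bar>"
      and sigma0: "\<sigma> 0 = 0"
      and r_pos: "r \<ge> 1"
      and dim_first: "d 1 0 = d0"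
      and dim_chain: "\<forall>k\<in>{2..L}. d k 0 = d (k - 1) r"
      and kappa_pos: "\<forall>k\<in>{1..L}. \<forall>i\<in>{1..r}. \<kappa> k i > 0"
      and b_nonneg: "\<forall>k\<in>{1..L}. \<forall>i\<in>{1..r}. b k i \<ge> 0"
      and l_range: "l \<in> {1..L}"
      and W_ok: "\<forall>k\<in>{1..<l}. weights_ok r (d k) (\<kappa> k) (b k) (W k)"
      and eps_pos: "\<epsilon> > 0"
  shows "let At = addI A;
             Hprev = gin_net \<sigma> At ntot r d W X (l - 1);
             S = {gin_layer \<sigma> At ntot r (d l) V Hprev | V. weights_ok r (d l) (\<kappa> l) (b l) V};
             kap = (\<lambda>k. \<Prod>j=1..r. \<kappa> k j);
             \<tau> = (\<Sum>i=1..r. (b l i / \<kappa> l i) powr (2/3)) powr (3/2);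
             c = specn ntot ntot At;
             dbar = Max {d k i | k i. k \<in> {1..L} \<and> i \<in> {0..r}};
             Ncov = covering_number \<epsilon> S ntot (d l r)
         in Ncov \<noteq> \<infinity> \<and>
            ln (real (the_enat Ncov)) \<le>
              c ^ (2 * l) * \<tau>\<^sup>2 * (\<Prod>k=1..l. kap k)\<^sup>2 / \<epsilon>\<^sup>2
                * (frob ntot d0 X)\<^sup>2 * ln (2 * (real dbar)\<^sup>2)"
proof -
  define At where "At = addI A"
  define c where "c = specn ntot ntot At"
  define kap where "kap k = (\<Prod>j=1..r. \<kappa> k j)" for k
  define \<tau> where "\<tau> = (\<Sum>i=1..r. (b l i / \<kappa> l i) powr (2/3)) powr (3/2)"
  define dbar where "dbar = Max {d k i | k i. k \<in> {1..L} \<and> i \<in> {0..r}}"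
  define M :: nat where "M = max 1 (2 * dbar\<^sup>2)"
  define S where "S = {gin_layer \<sigma> At ntot r (d l) V (gin_net \<sigma> At ntot r d W X (l - 1))
      | V. weights_ok r (d l) (\<kappa> l) (b l) V}"
  have "frob ntot (d l 0) (mmul ntot At (gin_net \<sigma> At ntot r d W X (l - 1)))
      \<le> c ^ l * (\<Prod>k=1..l-1. kap k) * frob ntot d0 X"
    unfolding c_def kap_def by (rule frob_layer_input_le[OF sigma_lip sigma0 dim_first dim_chain l_range W_ok])
  moreover have "\<forall>i\<in>{1..r}. 2 * d l (i - 1) * d l i \<le> M"
    unfolding M_def dbar_def by (rule two_mult_dims_le[OF l_range])
  moreover have "1 \<le> M" and "\<forall>i\<in>{1..r}. 0 < \<kappa> l i" and "\<forall>i\<in>{1..r}. 0 \<le> b l i"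
    using kappa_pos b_nonneg l_range unfolding M_def by simp_all
  ultimately have cover: "covering_number \<epsilon> S ntot (d l r) \<noteq> \<infinity> \<and>
      ln (real (the_enat (covering_number \<epsilon> S ntot (d l r))))
        \<le> (c ^ l * (\<Prod>k=1..l-1. kap k) * frob ntot d0 X * kap l)\<^sup>2 * \<tau>\<^sup>2 / \<epsilon>\<^sup>2 * ln (real M)"
    using ln_covering_number_gin_layer_le[OF sigma_lip sigma0] eps_pos
    unfolding S_def kap_def \<tau>_def by blast
  have "(c ^ l * (\<Prod>k=1..l-1. kap k) * frob ntot d0 X * kap l)\<^sup>2
      = (c ^ l)\<^sup>2 * (\<Prod>k=1..l. kap k)\<^sup>2 * (frob ntot d0 X)\<^sup>2"
    using l_range by (cases l) (simp_all add: prod.nat_ivl_Suc' power_mult_distrib mult_ac)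
  moreover have "ln (real M) = ln (2 * (real dbar)\<^sup>2)"
    unfolding M_def by (cases "dbar = 0") (simp_all add: max_def)
  ultimately show ?thesis
    using cover unfolding Let_def At_def[symmetric] S_def[symmetric] c_def[symmetric] kap_def[symmetric]
      \<tau>_def[symmetric] dbar_def[symmetric] power_even_eq by (simp add: mult_ac)
qed

end
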